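(* Let $\Gamma\le\mathrm{Iso}(\mathbb{R}^{r,s})$ be a subgroup whose centralizer in $\mathrm{Iso}(\mathbb{R}^{r,s})$ has an open orbit in $\mathbb{R}^{r,s}$, and let $\Delta$ be the center of $\Gamma$. Then $U_\Delta\perp U_\Gamma$.
   Context: $\mathbb{R}^{r,s}$ denotes $\mathbb{R}^{n}$, $n=r+s$, with a nondegenerate symmetric bilinear form $\langle\cdot,\cdot\rangle$ of signature $(r,s)$; $\mathrm{Iso}(\mathbb{R}^{r,s})$ is its group of affine isometries, whose elements are written $\gamma=(I+A,v)\colon x\mapsto(I+A)x+v$. For a subset $\Lambda$ of $\Gamma$, $U_\Lambda=\sum_{(I+A,v)\in\Lambda}\operatorname{im}A$. Known facts (Wolf) for such $\Gamma$: every $(I+A,v)\in\Gamma$ satisfies $A^2=0$, $Av=0$, $\langle Ax,y\rangle=-\langle x,Ay\rangle$, $\ker A=(\operatorname{im}A)^\perp$, $\operatorname{im}A$ totally isotropic; for $\gamma_i=(I+A_i,v_i)\in\Gamma$ one has $A_1A_2A_3=0$ and $[\gamma_1,\gamma_2]=(I+2A_1A_2,2A_1v_2)$. *)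

theory Defs
  imports "HOL-Analysis.Analysis"
begin

text \<open>A scalar product of signature (r,s) on real^'n: a symmetric bilinear form
  admitting a B-orthonormal basis with r vectors of square 1 and s of square -1.
  (This makes real^'n with B a copy of R^{r,s}.)\<close>
definition sig_form :: "(real^'n::finite \<Rightarrow> real^'n \<Rightarrow> real) \<Rightarrow> nat \<Rightarrow> nat \<Rightarrow> bool" where
  "sig_form B r s \<longleftrightarrow> bilinear B \<and> (\<forall>x y. B x y = B y x) \<and>
     (\<exists>f :: 'n \<Rightarrow> real^'n. span (range f) = UNIV \<and>
        (\<forall>i j. i \<noteq> j \<longrightarrow> B (f i) (f j) = 0) \<and>
        (\<forall>i. B (f i) (f i) = 1 \<or> B (f i) (f i) = -1) \<and>
        card {i. B (f i) (f i) = 1} = r \<and> card {i. B (f i) (f i) = -1} = s)"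

text \<open>Affine maps x \<mapsto> L x + v, represented as pairs (L, v).\<close>
type_synonym ('n) aff = "(real^'n::finite^'n) \<times> (real^'n)"

definition aff_apply :: "('n::finite) aff \<Rightarrow> real^'n \<Rightarrow> real^'n" where
  "aff_apply g x = fst g *v x + snd g"

definition aff_mult :: "('n::finite) aff \<Rightarrow> 'n aff \<Rightarrow> 'n aff" where
  "aff_mult g h = (fst g ** fst h, fst g *v snd h + snd g)"

definition aff_one :: "('n::finite) aff" where
  "aff_one = (mat 1, 0)"

definition aff_inv :: "('n::finite) aff \<Rightarrow> 'n aff" where
  "aff_inv g = (matrix_inv (fst g), - (matrix_inv (fst g) *v snd g))"

definition Iso :: "(real^'n::finite \<Rightarrow> real^'n \<Rightarrow> real) \<Rightarrow> 'n aff set" where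
  "Iso B = {g. \<forall>x y. B (fst g *v x) (fst g *v y) = B x y}"

definition is_subgroup :: "('n::finite) aff set \<Rightarrow> 'n aff set \<Rightarrow> bool" where
  "is_subgroup H G \<longleftrightarrow> H \<subseteq> G \<and> aff_one \<in> H \<and>
     (\<forall>g\<in>H. \<forall>h\<in>H. aff_mult g h \<in> H) \<and> (\<forall>g\<in>H. aff_inv g \<in> H)"

definition centralizer :: "('n::finite) aff set \<Rightarrow> 'n aff set \<Rightarrow> 'n aff set" where
  "centralizer G H = {g\<in>G. \<forall>h\<in>H. aff_mult g h = aff_mult h g}"

definition center :: "('n::finite) aff set \<Rightarrow> 'n aff set" where
  "center H = centralizer H H"

definition orbit :: "('n::finite) aff set \<Rightarrow> real^'n \<Rightarrow> (real^'n) set" where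
  "orbit H x = (\<lambda>g. aff_apply g x) ` H"

text \<open>U_Lambda = sum of the subspaces im A over (I+A, v) in Lambda, i.e. A = L - I.\<close>
definition U_of :: "('n::finite) aff set \<Rightarrow> (real^'n) set" where
  "U_of Lam = span (\<Union>g\<in>Lam. range (\<lambda>x. (fst g - mat 1) *v x))"

end

theory Submission
  imports Defs
begin

text \<open>
  Write \<open>\<gamma> = (I + A, v)\<close> and let \<open>disp \<gamma> y = \<gamma> y - y\<close> be the displacement of \<open>\<gamma>\<close>,
  an affine map with linear part \<open>A\<close>.  If \<open>z\<close> is an isometry commuting with \<open>\<gamma>\<^sub>1, \<gamma>\<^sub>2\<close>
  then \<open>disp \<gamma>\<^sub>i (z x) = L\<^sub>z (disp \<gamma>\<^sub>i x)\<close>, so \<open>B (disp \<gamma>\<^sub>1 y) (disp \<gamma>\<^sub>2 y)\<close> is constant on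
  every orbit of the centralizer.  A quadratic function constant on an open set has
  vanishing quadratic part, hence \<open>B (A\<^sub>1 h) (A\<^sub>2 h) = 0\<close>, and by polarization
  \<open>B (A\<^sub>1 h) (A\<^sub>2 k) + B (A\<^sub>1 k) (A\<^sub>2 h) = 0\<close> for all \<open>\<gamma>\<^sub>1, \<gamma>\<^sub>2 \<in> \<Gamma>\<close>.
  With \<open>\<gamma>\<^sub>1 = \<gamma>\<^sub>2\<close> this says \<open>im A\<close> is totally isotropic, which together with
  \<open>I + A\<close> being an isometry makes \<open>A\<close> skew-adjoint.  For \<open>\<delta> = (I + D, w)\<close> central,
  \<open>D\<close> and \<open>A\<close> commute, and skew-adjointness gives \<open>B (D h) (A k) = B (D k) (A h)\<close>;
  combined with the polarized identity this forces \<open>B (D h) (A k) = 0\<close>.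
\<close>

abbreviation lin_dev :: "('n::finite) aff \<Rightarrow> real^'n^'n" where
  "lin_dev g \<equiv> fst g - mat 1"

definition disp :: "('n::finite) aff \<Rightarrow> real^'n \<Rightarrow> real^'n" where
  "disp g y = aff_apply g y - y"

lemma disp_add: "disp g (y + h) = disp g y + lin_dev g *v h"
  unfolding disp_def aff_apply_def by (simp add: algebra_simps)

lemma aff_apply_mult: "aff_apply (aff_mult a b) y = aff_apply a (aff_apply b y)"
  unfolding aff_apply_def aff_mult_def
  by (simp add: matrix_vector_mul_assoc matrix_vector_right_distrib)

lemma disp_commuting:
  assumes "aff_mult z g = aff_mult g z"
  shows "disp g (aff_apply z x) = fst z *v disp g x"
proof -
  have "aff_apply g (aff_apply z x) = aff_apply z (aff_apply g x)"
    using assms aff_apply_mult by metis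
  thus ?thesis unfolding disp_def aff_apply_def
    by (simp add: matrix_vector_mult_diff_distrib)
qed

lemma disp_pairing_const_on_orbit:
  assumes "g1 \<in> H" "g2 \<in> H" "y \<in> orbit (centralizer (Iso B) H) x"
  shows "B (disp g1 y) (disp g2 y) = B (disp g1 x) (disp g2 x)"
proof -
  obtain z where z: "z \<in> centralizer (Iso B) H" "y = aff_apply z x"
    using assms(3) unfolding orbit_def by blast
  have iso: "z \<in> Iso B" and comm: "\<And>g. g \<in> H \<Longrightarrow> aff_mult z g = aff_mult g z"
    using z(1) unfolding centralizer_def by auto
  show ?thesis
    using disp_commuting[OF comm[OF assms(1)]] disp_commuting[OF comm[OF assms(2)]] iso z(2)
    unfolding Iso_def by simp
qed

text \<open>If \<open>B (f\<^sub>1 y) (f\<^sub>2 y)\<close> is constant on an open set, where \<open>f\<^sub>1, f\<^sub>2\<close> are affine with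
  linear parts \<open>A\<^sub>1, A\<^sub>2\<close>, then the quadratic part \<open>h \<mapsto> B (A\<^sub>1 h) (A\<^sub>2 h)\<close> vanishes:
  the symmetric difference quotient at an interior point kills the constant and linear
  terms, and the quadratic term scales.\<close>
lemma quadratic_part_zero:
  fixes B :: "real^'n \<Rightarrow> real^'n \<Rightarrow> real"
  assumes bl: "bilinear B" and op: "open U" and xU: "x \<in> U"
    and const: "\<And>y. y \<in> U \<Longrightarrow> B (f1 y) (f2 y) = c"
    and af1: "\<And>y h. f1 (y + h) = f1 y + A1 *v h"
    and af2: "\<And>y h. f2 (y + h) = f2 y + A2 *v h"
  shows "B (A1 *v h) (A2 *v h) = 0"
proof -
  obtain e where e: "e > 0" "ball x e \<subseteq> U" using op xU open_contains_ball by blast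
  have small: "B (A1 *v k) (A2 *v k) = 0" if "norm k < e" for k
  proof -
    have "x + k \<in> U" "x + (-k) \<in> U" using that e by (auto simp: dist_norm)
    hence q1: "B (f1 x + A1 *v k) (f2 x + A2 *v k) = c"
      and q2: "B (f1 x + A1 *v (-k)) (f2 x + A2 *v (-k)) = c"
      using const af1 af2 by metis+
    have q0: "B (f1 x) (f2 x) = c" using const xU by blast
    have neg: "A1 *v (-k) = - (A1 *v k)" "A2 *v (-k) = - (A2 *v k)"
      using matrix_vector_mult_scaleR[of A1 "-1" k] matrix_vector_mult_scaleR[of A2 "-1" k]
      by simp_all
    from q1 q2 q0 show ?thesis
      unfolding neg
      by (simp add: bilinear_ladd[OF bl] bilinear_radd[OF bl] bilinear_lsub[OF bl]
          bilinear_rsub[OF bl])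
  qed
  define t where "t = e / (2 * (norm h + 1))"
  have np: "norm h + 1 > 0" using norm_ge_zero[of h] by linarith
  have tpos: "t > 0" using e np unfolding t_def by simp
  have "norm (t *\<^sub>R h) = t * norm h" using tpos by simp
  also have "\<dots> < t * (2 * (norm h + 1))"
    using tpos np by (intro mult_strict_left_mono) auto
  also have "\<dots> = e" unfolding t_def using np by simp
  finally have "B (A1 *v (t *\<^sub>R h)) (A2 *v (t *\<^sub>R h)) = 0" by (rule small)
  hence "t * t * B (A1 *v h) (A2 *v h) = 0"
    by (simp add: matrix_vector_mult_scaleR bilinear_lmul[OF bl] bilinear_rmul[OF bl])
  thus ?thesis using tpos by simp
qed

lemma polarization:
  fixes B :: "real^'n \<Rightarrow> real^'n \<Rightarrow> real"
  assumes bl: "bilinear B" and q: "\<And>h. B (A1 *v h) (A2 *v h) = 0"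
  shows "B (A1 *v h) (A2 *v k) + B (A1 *v k) (A2 *v h) = 0"
proof -
  have "B (A1 *v (h + k)) (A2 *v (h + k)) = 0" by (rule q)
  thus ?thesis using q[of h] q[of k]
    by (simp add: matrix_vector_right_distrib bilinear_ladd[OF bl] bilinear_radd[OF bl])
qed

lemma open_orbit_polarized:
  fixes B :: "real^'n \<Rightarrow> real^'n \<Rightarrow> real"
  assumes bl: "bilinear B" and op: "open (orbit (centralizer (Iso B) H) x)"
    and g1: "g1 \<in> H" and g2: "g2 \<in> H"
  shows "B (lin_dev g1 *v h) (lin_dev g2 *v k) + B (lin_dev g1 *v k) (lin_dev g2 *v h) = 0"
proof -
  have "aff_one \<in> centralizer (Iso B) H"
    unfolding centralizer_def Iso_def aff_one_def aff_mult_def by simp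
  hence "x \<in> orbit (centralizer (Iso B) H) x"
    unfolding orbit_def by (force simp: aff_apply_def aff_one_def)
  from quadratic_part_zero[OF bl op this disp_pairing_const_on_orbit[OF g1 g2, of _ B x] disp_add disp_add]
  show ?thesis by (rule polarization[OF bl])
qed

lemma isotropic_isometry_skew:
  fixes B :: "real^'n \<Rightarrow> real^'n \<Rightarrow> real"
  assumes bl: "bilinear B"
    and iso: "\<And>x y. B ((mat 1 + A) *v x) ((mat 1 + A) *v y) = B x y"
    and isotropic: "\<And>x y. B (A *v x) (A *v y) = 0"
  shows "B (A *v h) k = - B h (A *v k)"
  using iso[of h k] isotropic[of h k]
  by (simp add: matrix_vector_mult_add_rdistrib bilinear_ladd[OF bl] bilinear_radd[OF bl])

lemma lin_dev_commute:
  fixes L M :: "real^'n^'n"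
  assumes "L ** M = M ** L"
  shows "(L - mat 1) *v ((M - mat 1) *v v) = (M - mat 1) *v ((L - mat 1) *v v)"
proof -
  have "L *v (M *v v) = M *v (L *v v)" by (simp add: matrix_vector_mul_assoc assms)
  thus ?thesis by (simp add: algebra_simps)
qed

text \<open>Commuting skew-adjoint maps \<open>D, A\<close> satisfy \<open>B (D h) (A k) = B (D k) (A h)\<close>;
  with the polarized identity this gives \<open>B (D h) (A k) = 0\<close>.\<close>
lemma commuting_skew_orthogonal:
  fixes B :: "real^'n \<Rightarrow> real^'n \<Rightarrow> real"
  assumes sym: "\<And>x y. B x y = B y x"
    and skewD: "\<And>x y. B (D *v x) y = - B x (D *v y)"
    and skewA: "\<And>x y. B (A *v x) y = - B x (A *v y)"
    and comm: "\<And>v. D *v (A *v v) = A *v (D *v v)"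
    and polar: "B (D *v h) (A *v k) + B (D *v k) (A *v h) = 0"
  shows "B (D *v h) (A *v k) = 0"
proof -
  have "B (D *v h) (A *v k) = - B h (D *v (A *v k))" by (rule skewD)
  also have "D *v (A *v k) = A *v (D *v k)" by (rule comm)
  also have "- B h (A *v (D *v k)) = B (A *v h) (D *v k)" using skewA[of h "D *v k"] by simp
  also have "\<dots> = B (D *v k) (A *v h)" by (rule sym)
  finally show ?thesis using polar by simp
qed

lemma bilinear_span_orthogonal:
  fixes B :: "real^'n \<Rightarrow> real^'n \<Rightarrow> real"
  assumes bl: "bilinear B" and gen: "\<And>a b. a \<in> S \<Longrightarrow> b \<in> T \<Longrightarrow> B a b = 0"
    and u: "u \<in> span S" and w: "w \<in> span T"
  shows "B u w = 0"
proof -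
  have "bilinear (\<lambda>(x::real^'n) (y::real^'n). 0::real)"
    by (simp add: bilinear_def linear_zero)
  from bilinear_eq[OF bl this, of "span S" S "span T" T u w] show ?thesis
    using gen u w by auto
qed

text \<open>For a group \<open>H\<close> of isometries whose centralizer has an open orbit, every
  linear part \<open>A\<close> has totally isotropic image and is therefore skew-adjoint.\<close>
lemma open_orbit_skew:
  fixes B :: "real^'n \<Rightarrow> real^'n \<Rightarrow> real"
  assumes bl: "bilinear B" and sym: "\<And>x y. B x y = B y x"
    and op: "open (orbit (centralizer (Iso B) H) x)"
    and HI: "H \<subseteq> Iso B" and g: "g \<in> H"
  shows "B (lin_dev g *v h) k = - B h (lin_dev g *v k)"
proof (rule isotropic_isometry_skew[OF bl])
  show "B ((mat 1 + lin_dev g) *v y) ((mat 1 + lin_dev g) *v z) = B y z" for y z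
    using g HI unfolding Iso_def by auto
  show "B (lin_dev g *v y) (lin_dev g *v z) = 0" for y z
    using open_orbit_polarized[OF bl op g g, of y z] sym[of "lin_dev g *v y"] by simp
qed

lemma open_orbit_center_orthogonal:
  fixes B :: "real^'n \<Rightarrow> real^'n \<Rightarrow> real"
  assumes bl: "bilinear B" and sym: "\<And>x y. B x y = B y x"
    and op: "open (orbit (centralizer (Iso B) H) x)"
    and HI: "H \<subseteq> Iso B" and d: "d \<in> center H" and g: "g \<in> H"
  shows "B (lin_dev d *v h) (lin_dev g *v k) = 0"
proof -
  have dH: "d \<in> H" and "aff_mult d g = aff_mult g d"
    using d g unfolding center_def centralizer_def by auto
  hence "fst d ** fst g = fst g ** fst d" unfolding aff_mult_def by simp
  hence "lin_dev d *v (lin_dev g *v v) = lin_dev g *v (lin_dev d *v v)" for v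
    by (rule lin_dev_commute)
  from commuting_skew_orthogonal[OF sym open_orbit_skew[OF bl sym op HI dH]
      open_orbit_skew[OF bl sym op HI g] this open_orbit_polarized[OF bl op dH g]]
  show ?thesis .
qed

theorem lemma4p1:
  fixes B :: "real^'n \<Rightarrow> real^'n \<Rightarrow> real" and r s :: nat
    and \<Gamma> :: "'n aff set"
  assumes "sig_form B r s"
    and "is_subgroup \<Gamma> (Iso B)"
    and "\<exists>x. open (orbit (centralizer (Iso B) \<Gamma>) x)"
  shows "\<forall>u\<in>U_of (center \<Gamma>). \<forall>w\<in>U_of \<Gamma>. B u w = 0"
proof -
  have bl: "bilinear B" and sym: "\<And>x y. B x y = B y x"
    using assms(1) unfolding sig_form_def by auto
  have HI: "\<Gamma> \<subseteq> Iso B" using assms(2) unfolding is_subgroup_def by simp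
  obtain x where op: "open (orbit (centralizer (Iso B) \<Gamma>) x)" using assms(3) by blast
  show ?thesis unfolding U_of_def
  proof (intro ballI)
    fix u w assume u: "u \<in> span (\<Union>d\<in>center \<Gamma>. range (\<lambda>x. lin_dev d *v x))"
      and w: "w \<in> span (\<Union>g\<in>\<Gamma>. range (\<lambda>x. lin_dev g *v x))"
    show "B u w = 0"
      by (rule bilinear_span_orthogonal[OF bl _ u w])
        (auto intro: open_orbit_center_orthogonal[OF bl sym op HI])
  qed
qed

end
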